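(* For the mechanism $\mathbb{M}_{\text{1-supply}}$ on a unit-supply two-sided market with XOS buyers, the expected sum of payments charged to the buyers equals $$\mathbb{E}\Big[\sum_{i\in[n]}\rho_i^B\Big]=\frac12\sum_{j\in L}p_j\,\Pr_{\mathbf v,Z}\big[j\notin\Lambda_{n+1}(\mathbf v,Z)\ \big|\ j\in Z\big].$$
   Context: Unit-supply two-sided market: buyers $[n]$, sellers $[k]$, seller $j$ owns only item $j$. Buyer valuations $v_i$ are monotone normalized XOS functions on $2^{[k]}$, drawn independently from public distributions $G_i$; seller values $w_j\ge0$ drawn independently from public distributions $F_j$. For XOS $v$ and $T\subseteq[k]$, $a(v,T,\cdot)$ is a fixed additive function with $a(v,T,T)=v(T)$, $a(v,T,S)\le v(S)$. $\mathbb{A}$ maps each buyer profile $\mathbf v$ to an allocation $X^{\mathbb A}(\mathbf v)$ of disjoint bundles to buyers. $\mathrm{SW}^B_j(\mathbf v)=a(v_i,X^{\mathbb A}_i(\mathbf v),\{j\})$ if $j\in X^{\mathbb A}_i(\mathbf v)$, else $0$. $L=\{j:\mathbb{E}[\mathrm{SW}^B_j(\mathbf v)]\ge4\mathbb{E}[w_j]\}$, $p_j=\frac12\mathbb{E}[\mathrm{SW}^B_j(\mathbf v)]$ for $j\in L$. $\mathbb{M}_{\text{1-supply}}$: for each $j\in L$, independently with probability $q_j=1/(2\Pr[w_j\le p_j])$ offer seller $j$ payment $p_j$; she accepts iff $w_j\le p_j$. $Z$ is the random set of items whose sellers received and accepted an offer; $\Lambda_1=Z$. Buyers $i=1,\dots,n$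 in turn pick $B_i\subseteq\Lambda_i$ maximizing $v_i(B_i)-\sum_{j\in B_i}p_j$, receive it and pay $\rho_i^B=\sum_{j\in B_i}p_j$, and $\Lambda_{i+1}=\Lambda_i\setminus B_i$. $\Lambda_{n+1}(\mathbf v,Z)$ is the set of accepted items bought by no buyer. *)

theory Defs
  imports "HOL-Probability.Probability"
begin

(* Buyers are 0..n-1, items/sellers are 0..k-1.  A valuation is a function on item sets. *)
type_synonym valuation = "nat set \<Rightarrow> real"

definition xos :: "nat \<Rightarrow> valuation \<Rightarrow> bool" where
  "xos k v \<longleftrightarrow> (\<exists>A :: (nat \<Rightarrow> real) set. finite A \<and> A \<noteq> {} \<and>
      (\<forall>c\<in>A. \<forall>j<k. 0 \<le> c j) \<and>
      (\<forall>S\<subseteq>{..<k}. v S = Max ((\<lambda>c. \<Sum>j\<in>S. c j) ` A)))"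

definition xos_valuation :: "nat \<Rightarrow> valuation \<Rightarrow> bool" where
  "xos_valuation k v \<longleftrightarrow> v {} = 0 \<and>
      (\<forall>S T. S \<subseteq> T \<and> T \<subseteq> {..<k} \<longrightarrow> v S \<le> v T) \<and> xos k v"

definition supporting_fn :: "nat \<Rightarrow> (valuation \<Rightarrow> nat set \<Rightarrow> nat set \<Rightarrow> real) \<Rightarrow> bool" where
  "supporting_fn k a \<longleftrightarrow> (\<forall>v T. xos_valuation k v \<and> T \<subseteq> {..<k} \<longrightarrow>
      (\<forall>S\<subseteq>{..<k}. a v T S = (\<Sum>j\<in>S. a v T {j})) \<and>
      (\<forall>j<k. 0 \<le> a v T {j}) \<and>
      a v T T = v T \<and>
      (\<forall>S\<subseteq>{..<k}. a v T S \<le> v S))"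

definition allocation_rule :: "nat \<Rightarrow> nat \<Rightarrow> ((nat \<Rightarrow> valuation) \<Rightarrow> nat \<Rightarrow> nat set) \<Rightarrow> bool" where
  "allocation_rule n k X \<longleftrightarrow> (\<forall>vs. (\<forall>i<n. X vs i \<subseteq> {..<k}) \<and>
      (\<forall>i<n. \<forall>i'<n. i \<noteq> i' \<longrightarrow> X vs i \<inter> X vs i' = {}))"

definition SW_B :: "nat \<Rightarrow> ((nat \<Rightarrow> valuation) \<Rightarrow> nat \<Rightarrow> nat set)
    \<Rightarrow> (valuation \<Rightarrow> nat set \<Rightarrow> nat set \<Rightarrow> real) \<Rightarrow> nat \<Rightarrow> (nat \<Rightarrow> valuation) \<Rightarrow> real" where
  "SW_B n X a j vs = (\<Sum>i<n. if j \<in> X vs i then a (vs i) (X vs i) {j} else 0)"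

definition ESW :: "nat \<Rightarrow> (nat \<Rightarrow> valuation measure) \<Rightarrow> ((nat \<Rightarrow> valuation) \<Rightarrow> nat \<Rightarrow> nat set)
    \<Rightarrow> (valuation \<Rightarrow> nat set \<Rightarrow> nat set \<Rightarrow> real) \<Rightarrow> nat \<Rightarrow> real" where
  "ESW n G X a j = (\<integral>vs. SW_B n X a j vs \<partial>(PiM {..<n} G))"

definition price :: "nat \<Rightarrow> (nat \<Rightarrow> valuation measure) \<Rightarrow> ((nat \<Rightarrow> valuation) \<Rightarrow> nat \<Rightarrow> nat set)
    \<Rightarrow> (valuation \<Rightarrow> nat set \<Rightarrow> nat set \<Rightarrow> real) \<Rightarrow> nat \<Rightarrow> real" where
  "price n G X a j = ESW n G X a j / 2"

definition Lset :: "nat \<Rightarrow> nat \<Rightarrow> (nat \<Rightarrow> valuation measure) \<Rightarrow> (nat \<Rightarrow> real measure)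
    \<Rightarrow> ((nat \<Rightarrow> valuation) \<Rightarrow> nat \<Rightarrow> nat set)
    \<Rightarrow> (valuation \<Rightarrow> nat set \<Rightarrow> nat set \<Rightarrow> real) \<Rightarrow> nat set" where
  "Lset n k G F X a = {j\<in>{..<k}. ESW n G X a j \<ge> 4 * (\<integral>w. w \<partial>(F j))}"

definition qprob :: "nat \<Rightarrow> (nat \<Rightarrow> valuation measure) \<Rightarrow> (nat \<Rightarrow> real measure)
    \<Rightarrow> ((nat \<Rightarrow> valuation) \<Rightarrow> nat \<Rightarrow> nat set)
    \<Rightarrow> (valuation \<Rightarrow> nat set \<Rightarrow> nat set \<Rightarrow> real) \<Rightarrow> nat \<Rightarrow> real" where
  "qprob n G F X a j = 1 / (2 * measure (F j) {w\<in>space (F j). w \<le> price n G X a j})"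

(* Z: items whose seller received (coin os j) and accepted (w_j \<le> p_j) an offer *)
definition acceptedZ :: "nat set \<Rightarrow> (nat \<Rightarrow> real) \<Rightarrow> (nat \<Rightarrow> real) \<Rightarrow> (nat \<Rightarrow> bool) \<Rightarrow> nat set" where
  "acceptedZ L p ws os = {j\<in>L. os j \<and> ws j \<le> p j}"

(* avail ch vs Z i = \<Lambda>_{i+1}: items still available when buyer i (0-based) arrives.
   ch i v S is buyer i's (deterministic, tie-broken) choice from available set S. *)
fun avail :: "(nat \<Rightarrow> valuation \<Rightarrow> nat set \<Rightarrow> nat set) \<Rightarrow> (nat \<Rightarrow> valuation) \<Rightarrow> nat set \<Rightarrow> nat \<Rightarrow> nat set" where
  "avail ch vs Z 0 = Z"
| "avail ch vs Z (Suc i) = avail ch vs Z i - ch i (vs i) (avail ch vs Z i)"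

definition buyer_bundle :: "(nat \<Rightarrow> valuation \<Rightarrow> nat set \<Rightarrow> nat set) \<Rightarrow> (nat \<Rightarrow> valuation) \<Rightarrow> nat set \<Rightarrow> nat \<Rightarrow> nat set" where
  "buyer_bundle ch vs Z i = ch i (vs i) (avail ch vs Z i)"

definition buyer_payment :: "(nat \<Rightarrow> real) \<Rightarrow> (nat \<Rightarrow> valuation \<Rightarrow> nat set \<Rightarrow> nat set)
    \<Rightarrow> (nat \<Rightarrow> valuation) \<Rightarrow> nat set \<Rightarrow> nat \<Rightarrow> real" where
  "buyer_payment p ch vs Z i = (\<Sum>j\<in>buyer_bundle ch vs Z i. p j)"

definition Omega :: "nat \<Rightarrow> nat \<Rightarrow> (nat \<Rightarrow> valuation measure) \<Rightarrow> (nat \<Rightarrow> real measure)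
    \<Rightarrow> (nat \<Rightarrow> real)
    \<Rightarrow> ((nat \<Rightarrow> valuation) \<times> (nat \<Rightarrow> real) \<times> (nat \<Rightarrow> bool)) measure" where
  "Omega n k G F q = PiM {..<n} G \<Otimes>\<^sub>M (PiM {..<k} F \<Otimes>\<^sub>M
       PiM {..<k} (\<lambda>j. measure_pmf (bernoulli_pmf (q j))))"

end

theory Submission
  imports Defs
begin

text \<open>
  Pointwise, the total buyer payment is the sum of the prices of the accepted items that are
  sold, since every item of Z is taken by at most one buyer and at its posted price; so its
  expectation is the sum over j in L of p_j Pr[j in Z, j not in Lambda_(n+1)]. For j in L we
  have p_j >= 2 E[w_j], hence Markov's inequality gives Pr[w_j <= p_j] >= 1/2. Thus q_j <= 1 is
  a genuine offer probability and, the offer coin being independent of the seller value,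
  Pr[j in Z] = q_j Pr[w_j <= p_j] = 1/2, which turns the joint probability into twice the
  conditional one.
\<close>

lemma avail_subset: "avail ch vs Z m \<subseteq> Z"
  by (induction m) auto

lemma sum_buyer_payment_eq_sold:
  assumes "finite Z"
    and ch_sub: "\<And>i S. i < m \<Longrightarrow> S \<subseteq> Z \<Longrightarrow> ch i (vs i) S \<subseteq> S"
  shows "(\<Sum>i<m. buyer_payment p ch vs Z i) = (\<Sum>j\<in>Z - avail ch vs Z m. p j)"
  using ch_sub
proof (induction m)
  case 0
  then show ?case by simp
next
  case (Suc m)
  let ?B = "buyer_bundle ch vs Z m" and ?A = "avail ch vs Z m"
  have "?B \<subseteq> ?A"
    using Suc.prems[of m ?A] avail_subset[of ch vs Z m] by (simp add: buyer_bundle_def)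
  then have "Z - avail ch vs Z (Suc m) = (Z - ?A) \<union> ?B" and "(Z - ?A) \<inter> ?B = {}"
    using avail_subset[of ch vs Z m] by (auto simp: buyer_bundle_def)
  moreover have "finite ?B"
    using \<open>?B \<subseteq> ?A\<close> avail_subset[of ch vs Z m] \<open>finite Z\<close> by (blast intro: finite_subset)
  ultimately show ?case
    using Suc \<open>finite Z\<close> by (simp add: buyer_payment_def sum.union_disjoint)
qed

lemma measurable_finite_set_valued:
  fixes f :: "'a \<Rightarrow> 'b set"
  assumes "finite L" and sub: "\<And>x. x \<in> space M \<Longrightarrow> f x \<subseteq> L"
    and mem: "\<And>j. j \<in> L \<Longrightarrow> Measurable.pred M (\<lambda>x. j \<in> f x)"
  shows "f \<in> M \<rightarrow>\<^sub>M count_space UNIV"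
proof -
  have "f \<in> M \<rightarrow>\<^sub>M count_space (Pow L)"
    unfolding measurable_count_space_eq2[OF finite_Pow_iff[THEN iffD2, OF \<open>finite L\<close>]]
  proof safe
    fix S assume "S \<subseteq> L"
    have "f -` {S} \<inter> space M = {x\<in>space M. \<forall>j\<in>L. j \<in> f x \<longleftrightarrow> j \<in> S}"
      using sub \<open>S \<subseteq> L\<close> by blast
    also have "\<dots> \<in> sets M"
      using mem \<open>finite L\<close> by measurable
    finally show "f -` {S} \<inter> space M \<in> sets M" .
  qed (use sub in auto)
  then show ?thesis
    by (rule measurable_compose) (rule measurable_count_space)
qed

lemma measurable_avail:
  fixes V :: "'a \<Rightarrow> nat \<Rightarrow> valuation"
  assumes "finite L" and Z_sub: "\<And>x. Z x \<subseteq> L" and Z_meas: "Z \<in> M \<rightarrow>\<^sub>M count_space UNIV"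
    and V_meas: "\<And>i. i < m \<Longrightarrow> (\<lambda>x. V x i) \<in> M \<rightarrow>\<^sub>M G i"
    and ch_meas: "\<And>i S. i < m \<Longrightarrow> S \<subseteq> L \<Longrightarrow> (\<lambda>v. ch i v S) \<in> G i \<rightarrow>\<^sub>M count_space UNIV"
  shows "(\<lambda>x. avail ch (V x) (Z x) m) \<in> M \<rightarrow>\<^sub>M count_space UNIV"
  using V_meas ch_meas
proof (induction m)
  case 0
  then show ?case using Z_meas by simp
next
  case (Suc m)
  let ?A = "\<lambda>x. avail ch (V x) (Z x) m"
  have "?A \<in> space M \<rightarrow> Pow L"
    using subset_trans[OF avail_subset Z_sub] by blast
  moreover have "?A \<in> M \<rightarrow>\<^sub>M count_space UNIV"
    using Suc by simp
  ultimately have A_meas: "?A \<in> M \<rightarrow>\<^sub>M count_space (Pow L)"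
    by (rule measurable_count_space_extend[OF subset_UNIV])
  have diff_meas: "(\<lambda>x. T - ch m (V x m) T) \<in> M \<rightarrow>\<^sub>M count_space UNIV" if "T \<in> Pow L" for T
  proof -
    have "(\<lambda>x. V x m) \<in> M \<rightarrow>\<^sub>M G m" and "(\<lambda>v. ch m v T) \<in> G m \<rightarrow>\<^sub>M count_space UNIV"
      using that by (auto intro: Suc.prems)
    then have "(\<lambda>x. ch m (V x m) T) \<in> M \<rightarrow>\<^sub>M count_space UNIV"
      by (rule measurable_compose)
    then show ?thesis
      by (rule measurable_compose) (rule measurable_count_space)
  qed
  show ?case
    using measurable_compose_countable'[where f = "\<lambda>T x. T - ch m (V x m) T", OF diff_meas A_meas]
      \<open>finite L\<close> by (simp add: countable_finite)
qed

lemma expectation_sum_buyer_payment: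
  fixes V :: "'a \<Rightarrow> nat \<Rightarrow> valuation"
  assumes "prob_space M" and "finite L"
    and Z_sub: "\<And>x. Z x \<subseteq> L" and Z_meas: "Z \<in> M \<rightarrow>\<^sub>M count_space UNIV"
    and V_meas: "\<And>i. i < n \<Longrightarrow> (\<lambda>x. V x i) \<in> M \<rightarrow>\<^sub>M G i"
    and ch_meas: "\<And>i S. i < n \<Longrightarrow> S \<subseteq> L \<Longrightarrow> (\<lambda>v. ch i v S) \<in> G i \<rightarrow>\<^sub>M count_space UNIV"
    and ch_sub: "\<And>i v S. i < n \<Longrightarrow> S \<subseteq> L \<Longrightarrow> ch i v S \<subseteq> S"
  shows "(\<integral>x. (\<Sum>i<n. buyer_payment p ch (V x) (Z x) i) \<partial>M)
       = (\<Sum>j\<in>L. p j * measure M {x\<in>space M. j \<in> Z x \<and> j \<notin> avail ch (V x) (Z x) n})"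
proof -
  interpret prob_space M by fact
  define sold where "sold j = {x\<in>space M. j \<in> Z x \<and> j \<notin> avail ch (V x) (Z x) n}" for j
  have [measurable]: "Measurable.pred M (\<lambda>x. j \<in> Z x)" for j
    using Z_meas by (rule measurable_compose) (rule measurable_count_space)
  have "(\<lambda>x. avail ch (V x) (Z x) n) \<in> M \<rightarrow>\<^sub>M count_space UNIV"
    using \<open>finite L\<close> Z_sub Z_meas V_meas ch_meas by (rule measurable_avail)
  then have [measurable]: "Measurable.pred M (\<lambda>x. j \<in> avail ch (V x) (Z x) n)" for j
    by (rule measurable_compose) (rule measurable_count_space)
  have sold_sets: "sold j \<in> sets M" for j
    unfolding sold_def by measurable
  have "(\<Sum>i<n. buyer_payment p ch (V x) (Z x) i) = (\<Sum>j\<in>L. p j * indicator (sold j) x)"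
    if "x \<in> space M" for x
  proof -
    have "finite (Z x)"
      using Z_sub \<open>finite L\<close> by (rule finite_subset)
    moreover have "ch i (V x i) S \<subseteq> S" if "i < n" and "S \<subseteq> Z x" for i S
      using ch_sub[OF \<open>i < n\<close> subset_trans[OF \<open>S \<subseteq> Z x\<close> Z_sub]] .
    ultimately have "(\<Sum>i<n. buyer_payment p ch (V x) (Z x) i) = (\<Sum>j\<in>Z x - avail ch (V x) (Z x) n. p j)"
      by (rule sum_buyer_payment_eq_sold)
    also have "\<dots> = (\<Sum>j\<in>L. if j \<in> Z x - avail ch (V x) (Z x) n then p j else 0)"
      using sum.inter_restrict[OF \<open>finite L\<close>] Z_sub[of x] by (metis Diff_subset inf.absorb2 subset_trans)
    also have "\<dots> = (\<Sum>j\<in>L. p j * indicator (sold j) x)"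
      using that by (intro sum.cong) (auto simp: sold_def)
    finally show ?thesis .
  qed
  then have "(\<integral>x. (\<Sum>i<n. buyer_payment p ch (V x) (Z x) i) \<partial>M)
           = (\<integral>x. (\<Sum>j\<in>L. p j * indicator (sold j) x) \<partial>M)"
    by (rule Bochner_Integration.integral_cong[OF refl])
  also have "\<dots> = (\<Sum>j\<in>L. (\<integral>x. p j * indicator (sold j) x \<partial>M))"
    using sold_sets
    by (intro Bochner_Integration.integral_sum integrable_mult_right integrable_real_indicator)
       (simp_all add: emeasure_eq_measure)
  also have "\<dots> = (\<Sum>j\<in>L. p j * measure M (sold j))"
    using sold_sets by (simp add: Int_absorb2 sets.sets_into_space)
  finally show ?thesis
    unfolding sold_def .
qed

lemma prob_le_ge_half_if_twice_mean_le:
  fixes N :: "real measure"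
  assumes "prob_space N" and sets_N: "sets N = sets borel"
    and nonneg: "AE w in N. 0 \<le> w" and int: "integrable N (\<lambda>w. w)"
    and le: "2 * (\<integral>w. w \<partial>N) \<le> c"
  shows "measure N {w\<in>space N. w \<le> c} \<ge> 1/2"
proof -
  interpret N: prob_space N by fact
  have [measurable]: "(\<lambda>w. w) \<in> borel_measurable N"
    using sets_N by (simp cong: measurable_cong_sets)
  have mean_nonneg: "0 \<le> (\<integral>w. w \<partial>N)"
    using nonneg by (rule integral_nonneg_AE)
  have le_sets: "{w\<in>space N. w \<le> c} \<in> sets N" and ge_sets: "{w\<in>space N. c \<le> w} \<in> sets N"
    by measurable
  have compl: "measure N {w\<in>space N. c < w} = 1 - measure N {w\<in>space N. w \<le> c}"
  proof -
    have "space N - {w\<in>space N. w \<le> c} = {w\<in>space N. c < w}"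
      by auto
    then show ?thesis
      using N.prob_compl[OF le_sets] by simp
  qed
  have "measure N {w\<in>space N. c < w} \<le> 1/2"
  proof (cases "0 < c")
    case True
    have "measure N {w\<in>space N. c < w} \<le> measure N {w\<in>space N. c \<le> w}"
      by (rule N.finite_measure_mono[OF _ ge_sets]) auto
    also have "\<dots> \<le> (\<integral>w. w \<partial>N) / c"
      by (rule integral_Markov_inequality_measure[OF int ge_sets nonneg True])
    also have "\<dots> \<le> 1/2"
      using le True by (simp add: divide_simps)
    finally show ?thesis .
  next
    case False
    with le mean_nonneg have "c = 0" and "(\<integral>w. w \<partial>N) = 0"
      by linarith+
    then have "AE w in N. w \<le> c"
      using integral_nonneg_eq_0_iff_AE[OF int nonneg] by auto
    then have "measure N {w\<in>space N. w \<le> c} = 1"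
      using N.prob_Collect_eq_1[OF le_sets] by simp
    then show ?thesis
      using compl by simp
  qed
  then show ?thesis
    using compl by simp
qed

lemma measure_PiM_component:
  assumes "\<And>i. i \<in> I \<Longrightarrow> prob_space (M i)" and "j \<in> I" and "A \<in> sets (M j)"
  shows "measure (PiM I M) ((\<lambda>x. x j) -` A \<inter> space (PiM I M)) = measure (M j) A"
proof -
  have "measure (PiM I M) ((\<lambda>x. x j) -` A \<inter> space (PiM I M))
        = measure (distr (PiM I M) (M j) (\<lambda>x. x j)) A"
    using \<open>j \<in> I\<close> \<open>A \<in> sets (M j)\<close> by (simp add: measure_distr)
  also have "distr (PiM I M) (M j) (\<lambda>x. x j) = M j"
    using assms by (intro distr_PiM_component)
  finally show ?thesis .
qed

lemma measure_pair_measure_Times: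
  assumes "finite_measure M1" and "finite_measure M2" and "A \<in> sets M1" and "B \<in> sets M2"
  shows "measure (M1 \<Otimes>\<^sub>M M2) (A \<times> B) = measure M1 A * measure M2 B"
proof -
  interpret M2: finite_measure M2 by fact
  show ?thesis
    using assms by (simp add: measure_def M2.emeasure_pair_measure_Times enn2real_mult)
qed

lemma prob_space_Omega:
  assumes "\<And>i. i < n \<Longrightarrow> prob_space (G i)" and "\<And>j. j < k \<Longrightarrow> prob_space (F j)"
  shows "prob_space (Omega n k G F q)"
  unfolding Omega_def using assms
  by (intro prob_space_pair prob_space_PiM prob_space_measure_pmf) auto

lemma measurable_acceptedZ:
  assumes "L \<subseteq> {..<k}" and F_borel: "\<And>j. j < k \<Longrightarrow> sets (F j) = sets borel"
  shows "(\<lambda>\<omega>. acceptedZ L p (fst (snd \<omega>)) (snd (snd \<omega>))) \<in> Omega n k G F q \<rightarrow>\<^sub>M count_space UNIV"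
proof (rule measurable_finite_set_valued)
  show "finite L"
    using \<open>L \<subseteq> {..<k}\<close> by (rule finite_subset) simp
  fix j assume "j \<in> L"
  then have "j < k"
    using \<open>L \<subseteq> {..<k}\<close> by auto
  then have [measurable]: "(\<lambda>w. w j) \<in> PiM {..<k} F \<rightarrow>\<^sub>M borel"
    using measurable_component_singleton[of j "{..<k}" F] by (simp cong: measurable_cong_sets add: F_borel)
  have "(\<lambda>b. b j) \<in> PiM {..<k} (\<lambda>j. measure_pmf (bernoulli_pmf (q j))) \<rightarrow>\<^sub>M bernoulli_pmf (q j)"
    using \<open>j < k\<close> by (intro measurable_component_singleton) simp
  then have [measurable]:
    "(\<lambda>b. b j) \<in> PiM {..<k} (\<lambda>j. measure_pmf (bernoulli_pmf (q j))) \<rightarrow>\<^sub>M count_space UNIV"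
    by (simp cong: measurable_cong_sets)
  show "Measurable.pred (Omega n k G F q) (\<lambda>\<omega>. j \<in> acceptedZ L p (fst (snd \<omega>)) (snd (snd \<omega>)))"
    using \<open>j \<in> L\<close> unfolding acceptedZ_def Omega_def by measurable
qed (auto simp: acceptedZ_def)

lemma measure_Omega_accepted:
  assumes G_prob: "\<And>i. i < n \<Longrightarrow> prob_space (G i)"
    and F_prob: "\<And>j. j < k \<Longrightarrow> prob_space (F j)"
    and F_borel: "\<And>j. j < k \<Longrightarrow> sets (F j) = sets borel"
    and "L \<subseteq> {..<k}" and "j \<in> L"
  shows "measure (Omega n k G F q)
           {\<omega>\<in>space (Omega n k G F q). j \<in> acceptedZ L p (fst (snd \<omega>)) (snd (snd \<omega>))}
       = measure (F j) {..p j} * pmf (bernoulli_pmf (q j)) True"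
proof -
  define PG where "PG = PiM {..<n} G"
  define PF where "PF = PiM {..<k} F"
  define PB where "PB = PiM {..<k} (\<lambda>j. measure_pmf (bernoulli_pmf (q j)))"
  have "j < k"
    using assms by auto
  have "prob_space PG" and "prob_space PF" and "prob_space PB"
    unfolding PG_def PF_def PB_def using G_prob F_prob
    by (auto intro!: prob_space_PiM prob_space_measure_pmf)
  then interpret PG: prob_space PG + PF: prob_space PF + PB: prob_space PB
    by simp_all
  define W where "W = {w\<in>space PF. w j \<le> p j}"
  define B where "B = {b\<in>space PB. b j}"
  have W_vimage: "W = (\<lambda>w. w j) -` {..p j} \<inter> space PF"
    and B_vimage: "B = (\<lambda>b. b j) -` {True} \<inter> space PB"
    unfolding W_def B_def by auto
  have "{..p j} \<in> sets (F j)"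
    using F_borel[OF \<open>j < k\<close>] by simp
  then have W: "W \<in> sets PF" "measure PF W = measure (F j) {..p j}"
    unfolding W_vimage PF_def using \<open>j < k\<close> F_prob
    by (auto intro: measurable_sets[OF measurable_component_singleton] measure_PiM_component)
  have "measure PB B = measure (bernoulli_pmf (q j)) {True}"
    unfolding B_vimage PB_def using \<open>j < k\<close>
    by (intro measure_PiM_component) (auto simp: prob_space_measure_pmf)
  then have B: "B \<in> sets PB" "measure PB B = pmf (bernoulli_pmf (q j)) True"
    unfolding B_vimage PB_def using \<open>j < k\<close>
    by (auto simp: measure_pmf_single intro: measurable_sets[OF measurable_component_singleton])
  have "space (Omega n k G F q) = space PG \<times> (space PF \<times> space PB)"
    by (simp add: Omega_def PG_def PF_def PB_def space_pair_measure)
  then have "{\<omega>\<in>space (Omega n k G F q). j \<in> acceptedZ L p (fst (snd \<omega>)) (snd (snd \<omega>))}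
        = space PG \<times> (W \<times> B)"
    unfolding W_def B_def acceptedZ_def using \<open>j \<in> L\<close> by fastforce
  then have "measure (Omega n k G F q)
      {\<omega>\<in>space (Omega n k G F q). j \<in> acceptedZ L p (fst (snd \<omega>)) (snd (snd \<omega>))}
      = measure (PG \<Otimes>\<^sub>M (PF \<Otimes>\<^sub>M PB)) (space PG \<times> (W \<times> B))"
    by (simp add: Omega_def PG_def PF_def PB_def)
  also have "\<dots> = measure PG (space PG) * (measure PF W * measure PB B)"
  proof -
    interpret PFB: prob_space "PF \<Otimes>\<^sub>M PB"
      by (intro prob_space_pair PF.prob_space_axioms PB.prob_space_axioms)
    show ?thesis
      using W(1) B(1) PG.finite_measure_axioms PF.finite_measure_axioms PB.finite_measure_axioms
        PFB.finite_measure_axioms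
      by (simp add: measure_pair_measure_Times)
  qed
  finally show ?thesis
    using W(2) B(2) PG.prob_space by simp
qed

lemma measure_Omega_accepted_eq_half:
  fixes n k :: nat and G :: "nat \<Rightarrow> valuation measure" and F :: "nat \<Rightarrow> real measure"
    and X :: "(nat \<Rightarrow> valuation) \<Rightarrow> nat \<Rightarrow> nat set" and a :: "valuation \<Rightarrow> nat set \<Rightarrow> nat set \<Rightarrow> real"
  defines "p \<equiv> price n G X a" and "L \<equiv> Lset n k G F X a" and "q \<equiv> qprob n G F X a"
  assumes G_prob: "\<And>i. i < n \<Longrightarrow> prob_space (G i)"
    and F_prob: "\<And>j. j < k \<Longrightarrow> prob_space (F j)"
    and F_borel: "\<And>j. j < k \<Longrightarrow> sets (F j) = sets borel"
    and F_nonneg: "\<And>j. j < k \<Longrightarrow> AE w in F j. 0 \<le> w"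
    and F_int: "\<And>j. j < k \<Longrightarrow> integrable (F j) (\<lambda>w. w)"
    and "j \<in> L"
  shows "measure (Omega n k G F q)
           {\<omega>\<in>space (Omega n k G F q). j \<in> acceptedZ L p (fst (snd \<omega>)) (snd (snd \<omega>))} = 1/2"
proof -
  have "L \<subseteq> {..<k}"
    by (auto simp: L_def Lset_def)
  with \<open>j \<in> L\<close> have "j < k"
    by auto
  define P where "P = measure (F j) {..p j}"
  have atMost_eq: "{w\<in>space (F j). w \<le> p j} = {..p j}"
    using sets_eq_imp_space_eq[OF F_borel[OF \<open>j < k\<close>]] by auto
  have "2 * (\<integral>w. w \<partial>F j) \<le> p j"
    using \<open>j \<in> L\<close> by (simp add: L_def Lset_def p_def price_def)
  then have "1/2 \<le> measure (F j) {w\<in>space (F j). w \<le> p j}"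
    using \<open>j < k\<close> F_prob F_borel F_nonneg F_int by (intro prob_le_ge_half_if_twice_mean_le)
  then have "1/2 \<le> P"
    by (simp add: P_def atMost_eq)
  moreover have "q j = 1 / (2 * P)"
    by (simp add: q_def qprob_def P_def atMost_eq flip: p_def)
  ultimately have "pmf (bernoulli_pmf (q j)) True = 1 / (2 * P)"
    \<comment> \<open>\<open>bernoulli_pmf\<close> clips its parameter to [0,1]; \<open>P \<ge> 1/2\<close> makes the clipping void\<close>
    by simp
  then show ?thesis
    using measure_Omega_accepted[OF G_prob F_prob F_borel \<open>L \<subseteq> {..<k}\<close> \<open>j \<in> L\<close>] \<open>1/2 \<le> P\<close>
    by (simp add: P_def)
qed

theorem proposition2:
  fixes n k :: nat
    and G :: "nat \<Rightarrow> valuation measure"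
    and F :: "nat \<Rightarrow> real measure"
    and X :: "(nat \<Rightarrow> valuation) \<Rightarrow> nat \<Rightarrow> nat set"
    and a :: "valuation \<Rightarrow> nat set \<Rightarrow> nat set \<Rightarrow> real"
    and ch :: "nat \<Rightarrow> valuation \<Rightarrow> nat set \<Rightarrow> nat set"
  defines "p \<equiv> price n G X a"
      and "L \<equiv> Lset n k G F X a"
      and "q \<equiv> qprob n G F X a"
  assumes G_prob: "\<And>i. i < n \<Longrightarrow> prob_space (G i)"
      and G_xos: "\<And>i. i < n \<Longrightarrow> AE v in G i. xos_valuation k v"
      and F_prob: "\<And>j. j < k \<Longrightarrow> prob_space (F j)"
      and F_borel: "\<And>j. j < k \<Longrightarrow> sets (F j) = sets borel"
      and F_nonneg: "\<And>j. j < k \<Longrightarrow> AE w in F j. 0 \<le> w"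
      and F_int: "\<And>j. j < k \<Longrightarrow> integrable (F j) (\<lambda>w. w)"
      and a_supp: "supporting_fn k a"
      and X_alloc: "allocation_rule n k X"
      and ch_opt: "\<And>i v S. i < n \<Longrightarrow> S \<subseteq> {..<k} \<Longrightarrow>
          ch i v S \<subseteq> S \<and>
          (\<forall>B\<subseteq>S. v B - (\<Sum>j\<in>B. p j) \<le> v (ch i v S) - (\<Sum>j\<in>ch i v S. p j))"
      and ch_meas: "\<And>i S. i < n \<Longrightarrow> S \<subseteq> {..<k} \<Longrightarrow>
          (\<lambda>v. ch i v S) \<in> measurable (G i) (count_space UNIV)"
  shows "(\<integral>\<omega>. (\<Sum>i<n. buyer_payment p ch (fst \<omega>)
              (acceptedZ L p (fst (snd \<omega>)) (snd (snd \<omega>))) i) \<partial>(Omega n k G F q))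
       = 1/2 * (\<Sum>j\<in>L. p j *
           (measure (Omega n k G F q)
              {\<omega>\<in>space (Omega n k G F q).
                 j \<in> acceptedZ L p (fst (snd \<omega>)) (snd (snd \<omega>)) \<and>
                 j \<notin> avail ch (fst \<omega>) (acceptedZ L p (fst (snd \<omega>)) (snd (snd \<omega>))) n}
            / measure (Omega n k G F q)
              {\<omega>\<in>space (Omega n k G F q).
                 j \<in> acceptedZ L p (fst (snd \<omega>)) (snd (snd \<omega>))}))"
proof -
  let ?\<Omega> = "Omega n k G F q"
  let ?Z = "\<lambda>\<omega>. acceptedZ L p (fst (snd \<omega>)) (snd (snd \<omega>))"
  have L_sub: "L \<subseteq> {..<k}"
    by (auto simp: L_def Lset_def)
  have fst_meas: "(\<lambda>\<omega>. fst \<omega> i) \<in> ?\<Omega> \<rightarrow>\<^sub>M G i" if "i < n" for i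
    unfolding Omega_def using that
    by (intro measurable_compose[OF measurable_fst measurable_component_singleton]) simp
  have payments: "(\<integral>\<omega>. (\<Sum>i<n. buyer_payment p ch (fst \<omega>) (?Z \<omega>) i) \<partial>?\<Omega>)
      = (\<Sum>j\<in>L. p j * measure ?\<Omega> {\<omega>\<in>space ?\<Omega>. j \<in> ?Z \<omega> \<and> j \<notin> avail ch (fst \<omega>) (?Z \<omega>) n})"
  proof (rule expectation_sum_buyer_payment)
    show "prob_space ?\<Omega>"
      using G_prob F_prob by (rule prob_space_Omega)
    show "finite L"
      using L_sub by (rule finite_subset) simp
    show "?Z \<in> ?\<Omega> \<rightarrow>\<^sub>M count_space UNIV"
      using L_sub F_borel by (rule measurable_acceptedZ)
    show "\<And>\<omega>. ?Z \<omega> \<subseteq> L"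
      by (auto simp: acceptedZ_def)
    show "(\<lambda>v. ch i v S) \<in> G i \<rightarrow>\<^sub>M count_space UNIV" if "i < n" and "S \<subseteq> L" for i S
      using that L_sub by (intro ch_meas) auto
    show "ch i v S \<subseteq> S" if "i < n" and "S \<subseteq> L" for i v S
      using ch_opt[of i S v] that L_sub by auto
  qed (rule fst_meas)
  have accepted_half: "measure ?\<Omega> {\<omega>\<in>space ?\<Omega>. j \<in> ?Z \<omega>} = 1/2" if "j \<in> L" for j
    using G_prob F_prob F_borel F_nonneg F_int that unfolding p_def L_def q_def
    by (rule measure_Omega_accepted_eq_half)
  show ?thesis
    unfolding payments sum_distrib_left by (rule sum.cong) (simp_all add: accepted_half)
qed

end
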